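(* Let $f,g\in L^2(\mathbb{R})$ and write $V=V(f,g)=U+iW$ with $U,W$ real-valued. Assume that $V(x_0,\omega_0)=0$ and $\det J_V(x_0,\omega_0)\neq 0$, where \[ J_V(x_0,\omega_0)=\begin{pmatrix} U_x(x_0,\omega_0) & U_\omega(x_0,\omega_0)\\ W_x(x_0,\omega_0) & W_\omega(x_0,\omega_0)\end{pmatrix}, \] and let $\psi(x,\omega)=\arg V(x,\omega)$ denote a (local differentiable) phase of $V$. (i) If $V\in C^2(\mathbb{R}^2,\mathbb{R}^2)$, then \[ \lim_{x\to x_0}\frac{\partial\psi}{\partial\omega}(x,\omega_0)=\begin{cases}-\infty, & x\to x_0\text{ from the left},\\ +\infty, & x\to x_0\text{ from the right},\end{cases} \] if $\det J_V(x_0,\omega_0)>0$, and \[ \lim_{x\to x_0}\frac{\partial\psi}{\partial\omega}(x,\omega_0)=\begin{cases}+\infty, & x\to x_0\text{ from the left},\\ -\infty, & x\to x_0\text{ from the right},\end{cases} \] if $\det J_V(x_0,\omega_0)<0$. (ii) If $V\in C^3(\mathbb{R}^2,\mathbb{R}^2)$, then $\lim_{\omega\to\omega_0}\frac{\partial\psi}{\partial\omega}(x_0,\omega)=c'$ for some real number $c'\in\mathbb{R}$.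
   Context: The short-time Fourier transform is $V(f,g)(x,\omega)=\int_{\mathbb{R}} f(t)\overline{g(t-x)}e^{-2\pi i\omega t}\,dt$, regarded as a map $\mathbb{R}^2\to\mathbb{R}^2\cong\mathbb{C}$; $C^k$ refers to real differentiability in $(x,\omega)$ and subscripts denote partial derivatives. At points where $V\neq 0$, a differentiable phase $\psi$ with $V=|V|e^{i\psi}$ exists locally, is unique up to an additive constant in $2\pi\mathbb{Z}$, and its partial derivative is $\frac{\partial\psi}{\partial\omega}=\frac{U W_\omega-W U_\omega}{U^2+W^2}$ (independent of the choice of phase). *)

theory Defs
  imports "HOL-Analysis.Analysis"
begin

definition L2 :: "(real \<Rightarrow> complex) \<Rightarrow> bool" where
  "L2 f \<longleftrightarrow> f \<in> borel_measurable lborel \<and> integrable lborel (\<lambda>t. (norm (f t))\<^sup>2)"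

definition STFT :: "(real \<Rightarrow> complex) \<Rightarrow> (real \<Rightarrow> complex) \<Rightarrow> real \<times> real \<Rightarrow> complex" where
  "STFT f g = (\<lambda>(x, \<omega>). integral\<^sup>L lborel
      (\<lambda>t. f t * cnj (g (t - x)) * exp (- (2 * complex_of_real pi * \<i> * complex_of_real \<omega> * complex_of_real t))))"

definition dx :: "(real \<times> real \<Rightarrow> complex) \<Rightarrow> real \<times> real \<Rightarrow> complex" where
  "dx F = (\<lambda>(x, \<omega>). vector_derivative (\<lambda>s. F (s, \<omega>)) (at x))"

definition dw :: "(real \<times> real \<Rightarrow> complex) \<Rightarrow> real \<times> real \<Rightarrow> complex" where
  "dw F = (\<lambda>(x, \<omega>). vector_derivative (\<lambda>s. F (x, s)) (at \<omega>))"

fun Ck :: "nat \<Rightarrow> (real \<times> real \<Rightarrow> complex) \<Rightarrow> bool" where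
  "Ck 0 F \<longleftrightarrow> continuous_on UNIV F"
| "Ck (Suc k) F \<longleftrightarrow> continuous_on UNIV F
     \<and> (\<forall>x \<omega>. (\<lambda>s. F (s, \<omega>)) differentiable (at x) \<and> (\<lambda>s. F (x, s)) differentiable (at \<omega>))
     \<and> Ck k (dx F) \<and> Ck k (dw F)"

definition detJ :: "(real \<times> real \<Rightarrow> complex) \<Rightarrow> real \<times> real \<Rightarrow> real" where
  "detJ V p = Re (dx V p) * Im (dw V p) - Re (dw V p) * Im (dx V p)"

text \<open>d psi / d omega = (U W_w - W U_w) / (U^2 + W^2), independent of the choice of phase.\<close>
definition phase_dw :: "(real \<times> real \<Rightarrow> complex) \<Rightarrow> real \<times> real \<Rightarrow> real" where
  "phase_dw V p = (Re (V p) * Im (dw V p) - Im (V p) * Re (dw V p)) / ((Re (V p))\<^sup>2 + (Im (V p))\<^sup>2)"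

end

theory Submission
  imports Defs
begin

text \<open>
  In complex notation the phase derivative is \<open>\<partial>\<psi>/\<partial>\<omega> = Im (V\<^sub>\<omega> / V)\<close>.
  Along \<open>\<omega> = \<omega>0\<close> we have \<open>V(x, \<omega>0) \<approx> (x - x0) V\<^sub>x\<close>, so \<open>(x - x0) \<partial>\<psi>/\<partial>\<omega>\<close> tends to
  \<open>Im (V\<^sub>\<omega> / V\<^sub>x) = det J\<^sub>V / |V\<^sub>x|\<^sup>2\<close>, and the sign of the Jacobian decides on which side the
  pole goes to \<open>+\<infinity>\<close>. Along \<open>x = x0\<close>, a second-order expansion shows that \<open>V\<^sub>\<omega> / V\<close> differs
  from the real number \<open>1 / (\<omega> - \<omega>0)\<close> by a term converging to \<open>V\<^sub>\<omega>\<^sub>\<omega> / (2 V\<^sub>\<omega>)\<close>; taking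
  imaginary parts removes the pole.
\<close>

lemma tendsto_divide_diff_at_zero:
  fixes u :: "real \<Rightarrow> complex"
  assumes "(u has_vector_derivative a) (at x)" and "u x = 0"
  shows "((\<lambda>s. u s / of_real (s - x)) \<longlongrightarrow> a) (at x)"
  using has_field_derivative_Re[OF assms(1)] has_field_derivative_Im[OF assms(1)] assms(2)
  by (simp add: tendsto_complex_iff has_field_derivative_iff)

lemma tendsto_second_order_quotient:
  fixes f f' f'' :: "real \<Rightarrow> real"
  assumes f': "\<And>s. (f has_real_derivative f' s) (at s)"
    and f'': "\<And>s. (f' has_real_derivative f'' s) (at s)"
    and "isCont f'' w" and "f w = 0"
  shows "((\<lambda>s. ((s - w) * f' s - f s) / (s - w)\<^sup>2) \<longlongrightarrow> f'' w / 2) (at w)"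
proof (rule lhopital)
  have "isCont (\<lambda>s. (s - w) * f' s - f s) w"
    using DERIV_isCont[OF f'] DERIV_isCont[OF f''] by (intro continuous_intros) auto
  then show "((\<lambda>s. (s - w) * f' s - f s) \<longlongrightarrow> 0) (at w)"
    using \<open>f w = 0\<close> by (simp add: isCont_def)
  show "((\<lambda>s. (s - w)\<^sup>2) \<longlongrightarrow> 0) (at w)"
    by (rule tendsto_eq_intros refl)+ auto
  show "\<forall>\<^sub>F s in at w. (s - w)\<^sup>2 \<noteq> 0" "\<forall>\<^sub>F s in at w. 2 * (s - w) \<noteq> 0"
    by (simp_all add: eventually_at_filter)
  show "\<forall>\<^sub>F s in at w. ((\<lambda>s. (s - w) * f' s - f s) has_real_derivative (s - w) * f'' s) (at s)"
    using f' f'' by (intro always_eventually allI) (auto intro!: derivative_eq_intros simp: algebra_simps)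
  show "\<forall>\<^sub>F s in at w. ((\<lambda>s. (s - w)\<^sup>2) has_real_derivative 2 * (s - w)) (at s)"
    by (intro always_eventually allI) (auto intro!: derivative_eq_intros)
  have "((\<lambda>s. f'' s / 2) \<longlongrightarrow> f'' w / 2) (at w)"
    using \<open>isCont f'' w\<close> by (intro tendsto_intros) (simp_all add: isCont_def)
  then show "((\<lambda>s. (s - w) * f'' s / (2 * (s - w))) \<longlongrightarrow> f'' w / 2) (at w)"
    by (rule Lim_transform_eventually) (auto simp: eventually_at_filter field_simps intro!: always_eventually)
qed

lemma tendsto_second_order_quotient_complex:
  fixes u u' u'' :: "real \<Rightarrow> complex"
  assumes "\<And>s. (u has_vector_derivative u' s) (at s)"
    and "\<And>s. (u' has_vector_derivative u'' s) (at s)"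
    and "isCont u'' w" and "u w = 0"
  shows "((\<lambda>s. (of_real (s - w) * u' s - u s) / of_real ((s - w)\<^sup>2)) \<longlongrightarrow> u'' w / 2) (at w)"
proof -
  have "isCont (\<lambda>s. Re (u'' s)) w" "isCont (\<lambda>s. Im (u'' s)) w"
    using \<open>isCont u'' w\<close> by (auto intro: continuous_intros)
  then show ?thesis
    using assms(4)
      tendsto_second_order_quotient[OF has_field_derivative_Re[OF assms(1)] has_field_derivative_Re[OF assms(2)]]
      tendsto_second_order_quotient[OF has_field_derivative_Im[OF assms(1)] has_field_derivative_Im[OF assms(2)]]
    by (simp add: tendsto_complex_iff)
qed

lemma tendsto_diff_mult_Im_divide_at_simple_zero:
  fixes u v :: "real \<Rightarrow> complex"
  assumes "(u has_vector_derivative a) (at x0)" and "u x0 = 0" and "a \<noteq> 0"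
    and "isCont v x0"
  shows "((\<lambda>x. (x - x0) * Im (v x / u x)) \<longlongrightarrow> Im (v x0 / a)) (at x0)"
proof -
  have "((\<lambda>x. Im (v x / (u x / of_real (x - x0)))) \<longlongrightarrow> Im (v x0 / a)) (at x0)"
    using tendsto_divide_diff_at_zero[OF assms(1,2)] \<open>isCont v x0\<close> \<open>a \<noteq> 0\<close>
    by (intro tendsto_intros) (simp_all add: isCont_def)
  then show ?thesis
    by (rule Lim_transform_eventually)
      (auto simp: eventually_at_filter Im_divide field_simps intro!: always_eventually)
qed

lemma tendsto_Im_log_derivative_at_simple_zero:
  fixes u u' u'' :: "real \<Rightarrow> complex"
  assumes "\<And>s. (u has_vector_derivative u' s) (at s)"
    and "\<And>s. (u' has_vector_derivative u'' s) (at s)"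
    and "isCont u'' w0" and "u w0 = 0" and "u' w0 \<noteq> 0"
  shows "((\<lambda>w. Im (u' w / u w)) \<longlongrightarrow> Im (u'' w0 / (2 * u' w0))) (at w0)"
proof -
  define Q where "Q w = u w / of_real (w - w0)" for w
  define R where "R w = (of_real (w - w0) * u' w - u w) / of_real ((w - w0)\<^sup>2)" for w
  have "((\<lambda>w. Im (R w / Q w)) \<longlongrightarrow> Im (u'' w0 / 2 / u' w0)) (at w0)"
    unfolding Q_def R_def
    by (intro tendsto_Im tendsto_divide tendsto_second_order_quotient_complex
        tendsto_divide_diff_at_zero assms)
  moreover have "Im (R w / Q w) = Im (u' w / u w)" if "w \<noteq> w0" for w
  proof (cases "u w = 0")
    case False
    have "((h * u' w - u w) / h\<^sup>2) / (u w / h) = u' w / u w - 1 / h" if "h \<noteq> 0" for h :: complex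
      using that False by (simp add: field_simps power2_eq_square)
    \<comment> \<open>for \<open>h = w - w0\<close> the correction term \<open>1 / h\<close> is real\<close>
    from this [of "of_real (w - w0)"] \<open>w \<noteq> w0\<close> show ?thesis
      by (simp add: Q_def R_def Im_divide)
  qed (simp add: Q_def)
  ultimately have "((\<lambda>w. Im (u' w / u w)) \<longlongrightarrow> Im (u'' w0 / 2 / u' w0)) (at w0)"
    by (elim Lim_transform_eventually) (simp add: eventually_at_filter always_eventually)
  then show ?thesis by simp
qed

lemma filterlim_at_left_right_of_tendsto_diff_mult_pos:
  fixes P :: "real \<Rightarrow> real"
  assumes "((\<lambda>y. (y - x0) * P y) \<longlongrightarrow> L) (at x0)" and "L > 0"
  shows "filterlim P at_bot (at_left x0) \<and> filterlim P at_top (at_right x0)"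
proof
  have left: "\<forall>\<^sub>F y in at_left x0. y < x0" and right: "\<forall>\<^sub>F y in at_right x0. x0 < y"
    by (simp_all add: eventually_at_left_field eventually_at_right_less) (meson lt_ex)
  have "filterlim (\<lambda>y. inverse (y - x0)) at_bot (at_left x0)"
    by (rule filterlim_inverse_at_bot) (auto intro!: tendsto_eq_intros eventually_mono[OF left])
  from filterlim_tendsto_pos_mult_at_bot[OF filterlim_at_split[THEN iffD1, OF assms(1), THEN conjunct1] \<open>L > 0\<close> this]
  show "filterlim P at_bot (at_left x0)"
    by (rule filterlim_mono_eventually) (auto intro: eventually_mono[OF left])
  have "filterlim (\<lambda>y. inverse (y - x0)) at_top (at_right x0)"
    by (rule filterlim_inverse_at_top) (auto intro!: tendsto_eq_intros eventually_mono[OF right])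
  from filterlim_tendsto_pos_mult_at_top[OF filterlim_at_split[THEN iffD1, OF assms(1), THEN conjunct2] \<open>L > 0\<close> this]
  show "filterlim P at_top (at_right x0)"
    by (rule filterlim_mono_eventually) (auto intro: eventually_mono[OF right])
qed

lemma filterlim_at_left_right_of_tendsto_diff_mult_neg:
  fixes P :: "real \<Rightarrow> real"
  assumes "((\<lambda>y. (y - x0) * P y) \<longlongrightarrow> L) (at x0)" and "L < 0"
  shows "filterlim P at_top (at_left x0) \<and> filterlim P at_bot (at_right x0)"
proof -
  have "((\<lambda>y. (y - x0) * - P y) \<longlongrightarrow> - L) (at x0)"
    using tendsto_minus[OF assms(1)] by simp
  from filterlim_at_left_right_of_tendsto_diff_mult_pos[OF this] \<open>L < 0\<close> show ?thesis
    by (simp add: filterlim_uminus_at_bot filterlim_uminus_at_top[symmetric])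
qed

lemma Ck_SucD:
  assumes "Ck (Suc k) F"
  shows "((\<lambda>s. F (s, w)) has_vector_derivative dx F (x, w)) (at x)"
    and "((\<lambda>s. F (x, s)) has_vector_derivative dw F (x, w)) (at w)"
    and "Ck k (dw F)"
  using assms vector_derivative_works by (auto simp: dx_def dw_def)

lemma Ck_continuous_on: "Ck k F \<Longrightarrow> continuous_on UNIV F"
  by (cases k) auto

lemma Ck_isCont_fst: "Ck k F \<Longrightarrow> isCont (\<lambda>s. F (s, w)) x"
  using Ck_continuous_on[of k F]
  by (intro isCont_o2[where f="\<lambda>s. (s, w)" and g=F]) (auto simp: continuous_on_eq_continuous_at)

lemma Ck_isCont_snd: "Ck k F \<Longrightarrow> isCont (\<lambda>s. F (x, s)) w"
  using Ck_continuous_on[of k F]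
  by (intro isCont_o2[where f="\<lambda>s. (x, s)" and g=F]) (auto simp: continuous_on_eq_continuous_at)

lemma phase_dw_eq_Im_divide: "phase_dw V p = Im (dw V p / V p)"
  by (simp add: phase_dw_def Im_divide algebra_simps)

lemma detJ_eq_Im_divide: "detJ V p = Im (dw V p / dx V p) * (cmod (dx V p))\<^sup>2"
  by (simp add: detJ_def Im_divide')

lemma tendsto_diff_mult_phase_dw:
  assumes "Ck 2 F" and "F (x0, w0) = 0" and "dx F (x0, w0) \<noteq> 0"
  shows "((\<lambda>x. (x - x0) * phase_dw F (x, w0)) \<longlongrightarrow> Im (dw F (x0, w0) / dx F (x0, w0))) (at x0)"
proof -
  have F: "Ck (Suc (Suc 0)) F" using \<open>Ck 2 F\<close> by (simp add: numeral_2_eq_2)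
  show ?thesis
    unfolding phase_dw_eq_Im_divide
    by (rule tendsto_diff_mult_Im_divide_at_simple_zero[OF Ck_SucD(1)[OF F]])
      (simp_all add: assms Ck_isCont_fst[OF Ck_SucD(3)[OF F]])
qed

lemma tendsto_phase_dw:
  assumes "Ck 3 F" and "F (x0, w0) = 0" and "dw F (x0, w0) \<noteq> 0"
  shows "((\<lambda>w. phase_dw F (x0, w)) \<longlongrightarrow> Im (dw (dw F) (x0, w0) / (2 * dw F (x0, w0)))) (at w0)"
proof -
  have F: "Ck (Suc (Suc (Suc 0))) F" using \<open>Ck 3 F\<close> by (simp add: numeral_3_eq_3)
  show ?thesis
    unfolding phase_dw_eq_Im_divide
    by (rule tendsto_Im_log_derivative_at_simple_zero[OF Ck_SucD(2)[OF F] Ck_SucD(2)[OF Ck_SucD(3)[OF F]]])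
      (simp_all add: assms Ck_isCont_snd[OF Ck_SucD(3)[OF Ck_SucD(3)[OF F]]])
qed

theorem mainTheorem7:
  fixes f g :: "real \<Rightarrow> complex" and x0 \<omega>0 :: real
  assumes "L2 f" and "L2 g"
    and "STFT f g (x0, \<omega>0) = 0"
    and "detJ (STFT f g) (x0, \<omega>0) \<noteq> 0"
  shows "(Ck 2 (STFT f g) \<longrightarrow>
           (detJ (STFT f g) (x0, \<omega>0) > 0 \<longrightarrow>
              filterlim (\<lambda>x. phase_dw (STFT f g) (x, \<omega>0)) at_bot (at_left x0) \<and>
              filterlim (\<lambda>x. phase_dw (STFT f g) (x, \<omega>0)) at_top (at_right x0)) \<and>
           (detJ (STFT f g) (x0, \<omega>0) < 0 \<longrightarrow>
              filterlim (\<lambda>x. phase_dw (STFT f g) (x, \<omega>0)) at_top (at_left x0) \<and>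
              filterlim (\<lambda>x. phase_dw (STFT f g) (x, \<omega>0)) at_bot (at_right x0)))
       \<and> (Ck 3 (STFT f g) \<longrightarrow>
           (\<exists>c::real. ((\<lambda>\<omega>. phase_dw (STFT f g) (x0, \<omega>)) \<longlongrightarrow> c) (at \<omega>0)))"
proof -
  let ?V = "STFT f g" and ?p = "(x0, \<omega>0)"
  have dx: "dx ?V ?p \<noteq> 0" and dw: "dw ?V ?p \<noteq> 0"
    using assms(4) by (auto simp: detJ_def)
  let ?L = "Im (dw ?V ?p / dx ?V ?p)"
  have sign: "0 < detJ ?V ?p \<longleftrightarrow> 0 < ?L" "detJ ?V ?p < 0 \<longleftrightarrow> ?L < 0"
    using detJ_eq_Im_divide[of ?V ?p] dx by (simp_all add: zero_less_mult_iff mult_less_0_iff)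
  have "((\<lambda>x. (x - x0) * phase_dw ?V (x, \<omega>0)) \<longlongrightarrow> ?L) (at x0)" if "Ck 2 ?V"
    using tendsto_diff_mult_phase_dw[OF that assms(3) dx] .
  note pole = filterlim_at_left_right_of_tendsto_diff_mult_pos[OF this]
    filterlim_at_left_right_of_tendsto_diff_mult_neg[OF this]
  have "\<exists>c. ((\<lambda>\<omega>. phase_dw ?V (x0, \<omega>)) \<longlongrightarrow> c) (at \<omega>0)" if "Ck 3 ?V"
    using tendsto_phase_dw[OF that assms(3) dw] by blast
  with pole sign show ?thesis by blast
qed

end
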